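(* Let $\mathfrak{A}[\tau]$ be a semi-associative topological partial *-algebra with multiplication core $\mathfrak{B}$ and unit $e\in\mathfrak{B}$, and let $\mathcal{M}\subseteq\mathcal{P}_{\mathfrak{B}}(\mathfrak{A})$ be sufficient. Take $\mathfrak{K}=\mathfrak{A}^+_{\mathcal{M}}$. Then $\|x\|_b:=\inf\{\gamma>0:-\gamma e\le x\le\gamma e\}$ is a norm on the real vector space $(\mathfrak{A}_b(\mathcal{M}))_h$ of hermitian $\mathfrak{K}$-bounded elements.
   Context: A partial *-algebra is a complex vector space $\mathfrak{A}$ with conjugate-linear involution and distributive partial multiplication on $\Gamma\subset\mathfrak{A}\times\mathfrak{A}$ with $(x,y)\in\Gamma$ iff $(y^*,x^* )\in\Gamma$, then $(xy)^*=y^*x^*$; $L(y)=\{x:(x,y)\in\Gamma\}$, $R(x)=\{y:(x,y)\in\Gamma\}$; $R\mathfrak{A}$, $L\mathfrak{A}$ universal right/left multipliers; unit $e=e^*\in R\mathfrak{A}\cap L\mathfrak{A}$ with $xe=ex=x$. Semi-associative: $y\in R(x)$ implies $yz\in R(x)$ and $(xy)z=x(yz)$ for $z\in R\mathfrak{A}$. Topological partial *-algebra: Hausdorff locally convex topology $\tau$ such that each map $y\in R(x)\mapsto xy$ is closed. $\tau^*$: seminorms $\max\{p(x),p(x^* )\}$. A multiplication core is a subspace $\mathfrak{B}\subseteq R\mathfrak{A}$ with: $e\in\mathfrak{B}$ if a unit exists; $\mathfrak{B}\mathfrak{B}\subseteq\mathfrak{B}$; $\mathfrak{B}$ $\tau^*$-dense;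 $x\mapsto xb$ $\tau$-continuous for $b\in\mathfrak{B}$; $b^*(xc)=(b^*x)c$. An ips-form with core $\mathfrak{B}$ is a positive sesquilinear form $\varphi$ on $\mathfrak{A}\times\mathfrak{A}$ with $\mathfrak{B}\subset R\mathfrak{A}$, $\{x+N_\varphi:x\in\mathfrak{B}\}$ dense in the completion of $\mathfrak{A}/N_\varphi$ ($N_\varphi=\{x:\varphi(x,x)=0\}$), $\varphi(xa,b)=\varphi(a,x^*b)$ and $\varphi(x^*a,yb)=\varphi(a,(xy)b)$ for $x\in L(y)$, $a,b\in\mathfrak{B}$. $\mathcal{P}_{\mathfrak{B}}(\mathfrak{A})$: such forms that are $\tau$-continuous. $\mathcal{M}$ is sufficient if $\varphi(x,x)=0$ for all $\varphi\in\mathcal{M}$ implies $x=0$. $\mathfrak{A}^+_{\mathcal{M}}=\{x:\varphi(xa,a)\ge0\ \forall\varphi\in\mathcal{M},a\in\mathfrak{B}\}$; it defines the order $x\le y\iff y-x\in\mathfrak{A}^+_{\mathcal{M}}$ on $\mathfrak{A}_h=\{x:x=x^*\}$. With $\Re(x)=\frac12(x+x^* )$, $\Im(x)=\frac1{2i}(x-x^* )$, an element $x$ is $\mathfrak{K}$-bounded if there is $\gamma\ge0$ with $\pm\Re(x)\le\gamma e$ and $\pm\Im(x)\le\gamma e$; $\mathfrak{A}_b(\mathcal{M})$ denotes the set of such elements for $\mathfrak{K}=\mathfrak{A}^+_{\mathcal{M}}$ and $(\mathfrak{A}_b(\mathcal{M}))_h$ its hermitian part. *)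

theory Defs
  imports "HOL-Analysis.Analysis"
begin

text \<open>
  A partial *-algebra on a complex vector space of type 'a is given by
  an involution invol, a set Gam of composable pairs and a multiplication mul
  (only meaningful on Gam).  The Hausdorff locally convex topology tau is
  given by a (separating) family P of seminorms generating it.
\<close>

definition L_set :: "('a \<times> 'a) set \<Rightarrow> 'a \<Rightarrow> 'a set" where
  "L_set Gam y = {x. (x, y) \<in> Gam}"

definition R_set :: "('a \<times> 'a) set \<Rightarrow> 'a \<Rightarrow> 'a set" where
  "R_set Gam x = {y. (x, y) \<in> Gam}"

definition RA :: "('a \<times> 'a) set \<Rightarrow> 'a set" where
  "RA Gam = {y. \<forall>x. (x, y) \<in> Gam}"

definition LA :: "('a \<times> 'a) set \<Rightarrow> 'a set" where
  "LA Gam = {x. \<forall>y. (x, y) \<in> Gam}"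

definition partial_star_algebra ::
  "(complex \<Rightarrow> 'a::ab_group_add \<Rightarrow> 'a) \<Rightarrow> ('a \<Rightarrow> 'a) \<Rightarrow> ('a \<times> 'a) set \<Rightarrow> ('a \<Rightarrow> 'a \<Rightarrow> 'a) \<Rightarrow> bool" where
  "partial_star_algebra sc invol Gam mul \<longleftrightarrow>
     vector_space sc \<and>
     (\<forall>x y. invol (x + y) = invol x + invol y) \<and>
     (\<forall>c x. invol (sc c x) = sc (cnj c) (invol x)) \<and>
     (\<forall>x. invol (invol x) = x) \<and>
     (\<forall>x y. (x, y) \<in> Gam \<longleftrightarrow> (invol y, invol x) \<in> Gam) \<and>
     (\<forall>x y. (x, y) \<in> Gam \<longrightarrow> invol (mul x y) = mul (invol y) (invol x)) \<and>
     (\<forall>x y z a b. (x, y) \<in> Gam \<and> (x, z) \<in> Gam \<longrightarrow>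
         (x, sc a y + sc b z) \<in> Gam \<and>
         mul x (sc a y + sc b z) = sc a (mul x y) + sc b (mul x z)) \<and>
     (\<forall>x y z a b. (x, z) \<in> Gam \<and> (y, z) \<in> Gam \<longrightarrow>
         (sc a x + sc b y, z) \<in> Gam \<and>
         mul (sc a x + sc b y) z = sc a (mul x z) + sc b (mul y z))"

definition is_unit_elem ::
  "('a::ab_group_add \<Rightarrow> 'a) \<Rightarrow> ('a \<times> 'a) set \<Rightarrow> ('a \<Rightarrow> 'a \<Rightarrow> 'a) \<Rightarrow> 'a \<Rightarrow> bool" where
  "is_unit_elem invol Gam mul e \<longleftrightarrow> e = invol e \<and> e \<in> RA Gam \<inter> LA Gam \<and>
     (\<forall>x. mul x e = x \<and> mul e x = x)"

definition semi_associative ::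
  "('a \<times> 'a) set \<Rightarrow> ('a \<Rightarrow> 'a \<Rightarrow> 'a) \<Rightarrow> bool" where
  "semi_associative Gam mul \<longleftrightarrow>
     (\<forall>x y z. y \<in> R_set Gam x \<and> z \<in> RA Gam \<longrightarrow>
        mul y z \<in> R_set Gam x \<and> mul (mul x y) z = mul x (mul y z))"

definition seminorm :: "(complex \<Rightarrow> 'a::ab_group_add \<Rightarrow> 'a) \<Rightarrow> ('a \<Rightarrow> real) \<Rightarrow> bool" where
  "seminorm sc p \<longleftrightarrow> (\<forall>x y. p (x + y) \<le> p x + p y) \<and> (\<forall>c x. p (sc c x) = norm c * p x)"

definition hausdorff_lc_seminorms :: "(complex \<Rightarrow> 'a::ab_group_add \<Rightarrow> 'a) \<Rightarrow> ('a \<Rightarrow> real) set \<Rightarrow> bool" where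
  "hausdorff_lc_seminorms sc P \<longleftrightarrow> (\<forall>p\<in>P. seminorm sc p) \<and> (\<forall>x. x \<noteq> 0 \<longrightarrow> (\<exists>p\<in>P. p x \<noteq> 0))"

definition near :: "('a::ab_group_add \<Rightarrow> real) set \<Rightarrow> real \<Rightarrow> 'a \<Rightarrow> 'a \<Rightarrow> bool" where
  "near F eps x y \<longleftrightarrow> (\<forall>p\<in>F. p (y - x) < eps)"

definition tau_continuous :: "('a::ab_group_add \<Rightarrow> real) set \<Rightarrow> ('a \<Rightarrow> 'a) \<Rightarrow> bool" where
  "tau_continuous P f \<longleftrightarrow> (\<forall>x. \<forall>p\<in>P. \<forall>eps>0. \<exists>F delta. finite F \<and> F \<subseteq> P \<and> delta > 0 \<and>
      (\<forall>y. near F delta x y \<longrightarrow> p (f y - f x) < eps))"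

definition tau_continuous2 :: "('a::ab_group_add \<Rightarrow> real) set \<Rightarrow> ('a \<Rightarrow> 'a \<Rightarrow> complex) \<Rightarrow> bool" where
  "tau_continuous2 P f \<longleftrightarrow> (\<forall>x y. \<forall>eps>0. \<exists>F delta. finite F \<and> F \<subseteq> P \<and> delta > 0 \<and>
      (\<forall>x' y'. near F delta x x' \<and> near F delta y y' \<longrightarrow> norm (f x' y' - f x y) < eps))"

text \<open>Topological partial *-algebra: each map y in R(x) |-> xy is closed, i.e.
  its graph is closed in A[tau] x A[tau] (expressed through basic neighbourhoods).\<close>
definition mult_closed :: "('a::ab_group_add \<Rightarrow> real) set \<Rightarrow> ('a \<times> 'a) set \<Rightarrow> ('a \<Rightarrow> 'a \<Rightarrow> 'a) \<Rightarrow> bool" where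
  "mult_closed P Gam mul \<longleftrightarrow> (\<forall>x y z.
      (\<forall>F eps. finite F \<and> F \<subseteq> P \<and> eps > 0 \<longrightarrow>
         (\<exists>y'\<in>R_set Gam x. near F eps y y' \<and> near F eps z (mul x y'))) \<longrightarrow>
      y \<in> R_set Gam x \<and> z = mul x y)"

definition topological_partial_star_algebra ::
  "(complex \<Rightarrow> 'a::ab_group_add \<Rightarrow> 'a) \<Rightarrow> ('a \<Rightarrow> 'a) \<Rightarrow> ('a \<times> 'a) set \<Rightarrow> ('a \<Rightarrow> 'a \<Rightarrow> 'a) \<Rightarrow> ('a \<Rightarrow> real) set \<Rightarrow> bool" where
  "topological_partial_star_algebra sc invol Gam mul P \<longleftrightarrow>
     partial_star_algebra sc invol Gam mul \<and> hausdorff_lc_seminorms sc P \<and> mult_closed P Gam mul"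

text \<open>tau*-density: tau* is generated by the seminorms x |-> max (p x) (p (invol x)).\<close>
definition tau_star_dense ::
  "(complex \<Rightarrow> 'a::ab_group_add \<Rightarrow> 'a) \<Rightarrow> ('a \<Rightarrow> 'a) \<Rightarrow> ('a \<Rightarrow> real) set \<Rightarrow> 'a set \<Rightarrow> bool" where
  "tau_star_dense sc invol P B \<longleftrightarrow> (\<forall>x F eps. finite F \<and> F \<subseteq> P \<and> eps > 0 \<longrightarrow>
      (\<exists>b\<in>B. \<forall>p\<in>F. max (p (b - x)) (p (invol (b - x))) < eps))"

definition multiplication_core ::
  "(complex \<Rightarrow> 'a::ab_group_add \<Rightarrow> 'a) \<Rightarrow> ('a \<Rightarrow> 'a) \<Rightarrow> ('a \<times> 'a) set \<Rightarrow> ('a \<Rightarrow> 'a \<Rightarrow> 'a) \<Rightarrow> ('a \<Rightarrow> real) set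
     \<Rightarrow> 'a \<Rightarrow> 'a set \<Rightarrow> bool" where
  "multiplication_core sc invol Gam mul P e B \<longleftrightarrow>
     module.subspace sc B \<and> B \<subseteq> RA Gam \<and> e \<in> B \<and>
     (\<forall>b\<in>B. \<forall>c\<in>B. mul b c \<in> B) \<and>
     tau_star_dense sc invol P B \<and>
     (\<forall>b\<in>B. tau_continuous P (\<lambda>x. mul x b)) \<and>
     (\<forall>b\<in>B. \<forall>c\<in>B. \<forall>x. mul (invol b) (mul x c) = mul (mul (invol b) x) c)"

definition positive_sesquilinear :: "(complex \<Rightarrow> 'a::ab_group_add \<Rightarrow> 'a) \<Rightarrow> ('a \<Rightarrow> 'a \<Rightarrow> complex) \<Rightarrow> bool" where
  "positive_sesquilinear sc phi \<longleftrightarrow>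
     (\<forall>x y z. phi (x + y) z = phi x z + phi y z) \<and>
     (\<forall>x y z. phi x (y + z) = phi x y + phi x z) \<and>
     (\<forall>c x y. phi (sc c x) y = c * phi x y) \<and>
     (\<forall>c x y. phi x (sc c y) = cnj c * phi x y) \<and>
     (\<forall>x. Im (phi x x) = 0 \<and> Re (phi x x) \<ge> 0)"

text \<open>ips-form with core B.  Density of {x + N_phi : x in B} in the completion of
  A/N_phi is written out: every x is approximated by elements of B in the
  seminorm x |-> sqrt (phi x x).\<close>
definition ips_form ::
  "(complex \<Rightarrow> 'a::ab_group_add \<Rightarrow> 'a) \<Rightarrow> ('a \<Rightarrow> 'a) \<Rightarrow> ('a \<times> 'a) set \<Rightarrow> ('a \<Rightarrow> 'a \<Rightarrow> 'a) \<Rightarrow> 'a set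
     \<Rightarrow> ('a \<Rightarrow> 'a \<Rightarrow> complex) \<Rightarrow> bool" where
  "ips_form sc invol Gam mul B phi \<longleftrightarrow>
     positive_sesquilinear sc phi \<and> B \<subseteq> RA Gam \<and>
     (\<forall>x eps. eps > 0 \<longrightarrow> (\<exists>b\<in>B. Re (phi (x - b) (x - b)) < eps)) \<and>
     (\<forall>x. \<forall>a\<in>B. \<forall>b\<in>B. phi (mul x a) b = phi a (mul (invol x) b)) \<and>
     (\<forall>x y. \<forall>a\<in>B. \<forall>b\<in>B. x \<in> L_set Gam y \<longrightarrow>
         phi (mul (invol x) a) (mul y b) = phi a (mul (mul x y) b))"

definition P_B ::
  "(complex \<Rightarrow> 'a::ab_group_add \<Rightarrow> 'a) \<Rightarrow> ('a \<Rightarrow> 'a) \<Rightarrow> ('a \<times> 'a) set \<Rightarrow> ('a \<Rightarrow> 'a \<Rightarrow> 'a) \<Rightarrow> ('a \<Rightarrow> real) set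
     \<Rightarrow> 'a set \<Rightarrow> ('a \<Rightarrow> 'a \<Rightarrow> complex) set" where
  "P_B sc invol Gam mul P B = {phi. ips_form sc invol Gam mul B phi \<and> tau_continuous2 P phi}"

definition sufficient :: "('a::zero \<Rightarrow> 'a \<Rightarrow> complex) set \<Rightarrow> bool" where
  "sufficient M \<longleftrightarrow> (\<forall>x. (\<forall>phi\<in>M. phi x x = 0) \<longrightarrow> x = 0)"

definition pos_cone ::
  "('a \<Rightarrow> 'a \<Rightarrow> 'a) \<Rightarrow> 'a set \<Rightarrow> ('a \<Rightarrow> 'a \<Rightarrow> complex) set \<Rightarrow> 'a set" where
  "pos_cone mul B M = {x. \<forall>phi\<in>M. \<forall>a\<in>B. Im (phi (mul x a) a) = 0 \<and> Re (phi (mul x a) a) \<ge> 0}"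

definition K_le :: "'a::ab_group_add set \<Rightarrow> 'a \<Rightarrow> 'a \<Rightarrow> bool" where
  "K_le K x y \<longleftrightarrow> y - x \<in> K"

definition Re_part :: "(complex \<Rightarrow> 'a::ab_group_add \<Rightarrow> 'a) \<Rightarrow> ('a \<Rightarrow> 'a) \<Rightarrow> 'a \<Rightarrow> 'a" where
  "Re_part sc invol x = sc (1/2) (x + invol x)"

definition Im_part :: "(complex \<Rightarrow> 'a::ab_group_add \<Rightarrow> 'a) \<Rightarrow> ('a \<Rightarrow> 'a) \<Rightarrow> 'a \<Rightarrow> 'a" where
  "Im_part sc invol x = sc (1 / (2 * \<i>)) (x - invol x)"

definition K_bounded :: "(complex \<Rightarrow> 'a::ab_group_add \<Rightarrow> 'a) \<Rightarrow> ('a \<Rightarrow> 'a) \<Rightarrow> 'a set \<Rightarrow> 'a \<Rightarrow> 'a \<Rightarrow> bool" where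
  "K_bounded sc invol K e x \<longleftrightarrow> (\<exists>\<gamma>::real. \<gamma> \<ge> 0 \<and>
      K_le K (Re_part sc invol x) (sc (complex_of_real \<gamma>) e) \<and> K_le K (- Re_part sc invol x) (sc (complex_of_real \<gamma>) e) \<and>
      K_le K (Im_part sc invol x) (sc (complex_of_real \<gamma>) e) \<and> K_le K (- Im_part sc invol x) (sc (complex_of_real \<gamma>) e))"

definition Ab_h :: "(complex \<Rightarrow> 'a::ab_group_add \<Rightarrow> 'a) \<Rightarrow> ('a \<Rightarrow> 'a) \<Rightarrow> 'a set \<Rightarrow> 'a \<Rightarrow> 'a set" where
  "Ab_h sc invol K e = {x. K_bounded sc invol K e x \<and> invol x = x}"

definition norm_b :: "(complex \<Rightarrow> 'a::ab_group_add \<Rightarrow> 'a) \<Rightarrow> 'a set \<Rightarrow> 'a \<Rightarrow> 'a \<Rightarrow> real" where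
  "norm_b sc K e x = Inf {\<gamma>::real. \<gamma> > 0 \<and> K_le K (- (sc (complex_of_real \<gamma>) e)) x \<and> K_le K x (sc (complex_of_real \<gamma>) e)}"

definition is_norm_on :: "(complex \<Rightarrow> 'a::ab_group_add \<Rightarrow> 'a) \<Rightarrow> 'a set \<Rightarrow> ('a \<Rightarrow> real) \<Rightarrow> bool" where
  "is_norm_on sc V N \<longleftrightarrow> module.subspace (\<lambda>r. sc (complex_of_real r)) V \<and>
     (\<forall>x\<in>V. N x \<ge> 0) \<and> (\<forall>x\<in>V. N x = 0 \<longleftrightarrow> x = 0) \<and>
     (\<forall>c. \<forall>x\<in>V. N (sc (complex_of_real c) x) = \<bar>c\<bar> * N x) \<and>
     (\<forall>x\<in>V. \<forall>y\<in>V. N (x + y) \<le> N x + N y)"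

end

theory Submission
  imports Defs
begin

text \<open>
  The admissible bounds \<open>\<gamma> > 0\<close> with \<open>-\<gamma>e \<le> x \<le> \<gamma>e\<close> add and scale along with \<open>x\<close>
  and do not change under \<open>x \<mapsto> -x\<close>, because the order comes from a cone containing \<open>e\<close>;
  so their infimum is a seminorm on the bounded elements.  Definiteness is where the forms
  enter: if the infimum is \<open>0\<close>, then \<open>|\<phi>(xc, c)| \<le> \<gamma> \<phi>(c, c)\<close> for arbitrarily small \<open>\<gamma>\<close>, so
  \<open>\<phi>(xc, c) = 0\<close> on the core; polarization gives \<open>\<phi>(xa, b) = 0\<close> on the core, which with
  \<open>b = e\<close> or \<open>a = e\<close> and \<open>x = x\<^sup>*\<close> makes \<open>x\<close> \<open>\<phi>\<close>-orthogonal to the core.  Density of the core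
  yields \<open>\<phi>(x, x) = 0\<close>, and sufficiency of \<open>M\<close> yields \<open>x = 0\<close>.
\<close>

lemma cInf_image_mult_left:
  fixes S :: "real set"
  assumes "0 \<le> c" "S \<noteq> {}" "bdd_below S"
  shows "Inf ((*) c ` S) = c * Inf S"
  using continuous_at_Inf_mono[of "(*) c" S] assms
  by (simp add: mono_def mult_left_mono continuous_intros)

locale order_unit_cone = vector_space sc for sc :: "complex \<Rightarrow> 'a::ab_group_add \<Rightarrow> 'a" +
  fixes K :: "'a set" and e :: 'a
  assumes cone_add: "x \<in> K \<Longrightarrow> y \<in> K \<Longrightarrow> x + y \<in> K"
    and cone_scale: "x \<in> K \<Longrightarrow> 0 \<le> r \<Longrightarrow> sc (of_real r) x \<in> K"
    and unit_in_cone: "e \<in> K"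
begin

definition unit_bounds :: "'a \<Rightarrow> real set" where
  "unit_bounds x = {\<gamma>. 0 < \<gamma> \<and> K_le K (- sc (of_real \<gamma>) e) x \<and> K_le K x (sc (of_real \<gamma>) e)}"

lemma mem_unit_bounds:
  "\<gamma> \<in> unit_bounds x \<longleftrightarrow> 0 < \<gamma> \<and> x + sc (of_real \<gamma>) e \<in> K \<and> sc (of_real \<gamma>) e - x \<in> K"
  by (simp add: unit_bounds_def K_le_def)

lemma norm_b_eq_Inf: "norm_b sc K e x = Inf (unit_bounds x)"
  by (simp add: norm_b_def unit_bounds_def)

lemma unit_bounds_nonempty_iff:
  "unit_bounds x \<noteq> {} \<longleftrightarrow> (\<exists>\<gamma>\<ge>0. x + sc (of_real \<gamma>) e \<in> K \<and> sc (of_real \<gamma>) e - x \<in> K)"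
proof
  assume "\<exists>\<gamma>\<ge>0. x + sc (of_real \<gamma>) e \<in> K \<and> sc (of_real \<gamma>) e - x \<in> K"
  then obtain \<gamma> where "0 \<le> \<gamma>" "x + sc (of_real \<gamma>) e \<in> K" "sc (of_real \<gamma>) e - x \<in> K"
    by blast
  moreover have "x + sc (of_real (\<gamma> + 1)) e = (x + sc (of_real \<gamma>) e) + e"
    "sc (of_real (\<gamma> + 1)) e - x = (sc (of_real \<gamma>) e - x) + e"
    by (simp_all add: scale_left_distrib algebra_simps)
  ultimately have "\<gamma> + 1 \<in> unit_bounds x"
    unfolding mem_unit_bounds by (metis cone_add unit_in_cone le_less_trans less_add_one)
  then show "unit_bounds x \<noteq> {}" by blast
qed (auto simp: mem_unit_bounds)

lemma module_of_real_scale: "module (\<lambda>r. sc (of_real r))"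
  by unfold_locales (simp_all add: scale_right_distrib scale_left_distrib)

lemma scale_unit_in_cone: "0 \<le> r \<Longrightarrow> sc (of_real r) e \<in> K"
  using cone_scale unit_in_cone by blast

lemma unit_bounds_pos: "\<gamma> \<in> unit_bounds x \<Longrightarrow> 0 < \<gamma>"
  by (simp add: mem_unit_bounds)

lemma bdd_below_unit_bounds: "bdd_below (unit_bounds x)"
  by (auto simp: bdd_below_def dest: unit_bounds_pos intro!: exI[of _ 0])

lemma unit_bounds_zero: "unit_bounds 0 = {0<..}"
  by (auto simp: mem_unit_bounds scale_unit_in_cone)

lemma unit_bounds_uminus: "unit_bounds (- x) = unit_bounds x"
  by (auto simp: mem_unit_bounds algebra_simps)

lemma unit_bounds_add:
  assumes "\<gamma> \<in> unit_bounds x" "\<delta> \<in> unit_bounds y"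
  shows "\<gamma> + \<delta> \<in> unit_bounds (x + y)"
proof -
  have "x + y + sc (of_real (\<gamma> + \<delta>)) e = (x + sc (of_real \<gamma>) e) + (y + sc (of_real \<delta>) e)"
    "sc (of_real (\<gamma> + \<delta>)) e - (x + y) = (sc (of_real \<gamma>) e - x) + (sc (of_real \<delta>) e - y)"
    by (simp_all add: scale_left_distrib algebra_simps)
  with assms show ?thesis
    unfolding mem_unit_bounds by (metis add_pos_pos cone_add)
qed

lemma mult_mem_unit_bounds:
  assumes "0 < c" "\<gamma> \<in> unit_bounds x"
  shows "c * \<gamma> \<in> unit_bounds (sc (of_real c) x)"
proof -
  have "sc (of_real c) (x + sc (of_real \<gamma>) e) \<in> K" "sc (of_real c) (sc (of_real \<gamma>) e - x) \<in> K"
    using assms by (simp_all add: mem_unit_bounds cone_scale)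
  then show ?thesis
    using assms by (simp add: mem_unit_bounds scale_right_distrib scale_right_diff_distrib)
qed

lemma unit_bounds_scale:
  assumes "0 < c"
  shows "unit_bounds (sc (of_real c) x) = (*) c ` unit_bounds x"
proof
  show "(*) c ` unit_bounds x \<subseteq> unit_bounds (sc (of_real c) x)"
    using mult_mem_unit_bounds[OF assms] by blast
  show "unit_bounds (sc (of_real c) x) \<subseteq> (*) c ` unit_bounds x"
  proof
    fix \<delta> assume "\<delta> \<in> unit_bounds (sc (of_real c) x)"
    then have "(1 / c) * \<delta> \<in> unit_bounds (sc (of_real (1 / c)) (sc (of_real c) x))"
      using assms by (intro mult_mem_unit_bounds) simp_all
    then have "\<delta> / c \<in> unit_bounds x"
      using assms by simp
    then show "\<delta> \<in> (*) c ` unit_bounds x"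
      using assms by (intro image_eqI[of _ _ "\<delta> / c"]) simp_all
  qed
qed

lemma norm_b_nonneg: "unit_bounds x \<noteq> {} \<Longrightarrow> 0 \<le> norm_b sc K e x"
  unfolding norm_b_eq_Inf by (rule cInf_greatest) (auto dest: unit_bounds_pos)

lemma norm_b_zero: "norm_b sc K e 0 = 0"
  by (simp add: norm_b_eq_Inf unit_bounds_zero)

lemma norm_b_uminus: "norm_b sc K e (- x) = norm_b sc K e x"
  by (simp add: norm_b_eq_Inf unit_bounds_uminus)

lemma norm_b_scale_pos:
  "0 < c \<Longrightarrow> unit_bounds x \<noteq> {} \<Longrightarrow> norm_b sc K e (sc (of_real c) x) = c * norm_b sc K e x"
  by (simp add: norm_b_eq_Inf unit_bounds_scale cInf_image_mult_left bdd_below_unit_bounds)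

lemma norm_b_scale:
  assumes "unit_bounds x \<noteq> {}"
  shows "norm_b sc K e (sc (of_real c) x) = \<bar>c\<bar> * norm_b sc K e x"
proof (cases c "0 :: real" rule: linorder_cases)
  case less
  have "sc (of_real c) x = sc (of_real (- c)) (- x)"
    by (simp add: scale_minus_left scale_minus_right)
  then show ?thesis
    using less assms norm_b_scale_pos[of "- c" "- x"] by (simp add: unit_bounds_uminus norm_b_uminus)
qed (use assms norm_b_zero norm_b_scale_pos in auto)

lemma norm_b_triangle:
  assumes "unit_bounds x \<noteq> {}" "unit_bounds y \<noteq> {}"
  shows "norm_b sc K e (x + y) \<le> norm_b sc K e x + norm_b sc K e y"
proof -
  have "Inf (unit_bounds (x + y)) - Inf (unit_bounds x) \<le> Inf (unit_bounds y)"
  proof (rule cInf_greatest[OF assms(2)])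
    fix \<delta> assume \<delta>: "\<delta> \<in> unit_bounds y"
    have "Inf (unit_bounds (x + y)) - \<delta> \<le> Inf (unit_bounds x)"
    proof (rule cInf_greatest[OF assms(1)])
      fix \<gamma> assume "\<gamma> \<in> unit_bounds x"
      then have "Inf (unit_bounds (x + y)) \<le> \<gamma> + \<delta>"
        using \<delta> by (intro cInf_lower unit_bounds_add bdd_below_unit_bounds)
      then show "Inf (unit_bounds (x + y)) - \<delta> \<le> \<gamma>" by simp
    qed
    then show "Inf (unit_bounds (x + y)) - Inf (unit_bounds x) \<le> \<delta>" by simp
  qed
  then show ?thesis by (simp add: norm_b_eq_Inf)
qed

lemma real_subspace_bounded: "module.subspace (\<lambda>r. sc (of_real r)) {x. unit_bounds x \<noteq> {}}"
proof -
  have "sc (of_real c) x \<in> {x. unit_bounds x \<noteq> {}}" if "unit_bounds x \<noteq> {}" for c x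
  proof (cases c "0 :: real" rule: linorder_cases)
    case less
    have "sc (of_real c) x = sc (of_real (- c)) (- x)"
      by (simp add: scale_minus_left scale_minus_right)
    then show ?thesis
      using less that unit_bounds_scale[of "- c" "- x"] by (simp add: unit_bounds_uminus)
  qed (use that unit_bounds_scale unit_bounds_zero in auto)
  then show ?thesis
    unfolding module.subspace_def[OF module_of_real_scale]
    by (auto simp: unit_bounds_zero dest: unit_bounds_add)
qed

lemma is_norm_on_if_definite:
  assumes "module.subspace (\<lambda>r. sc (of_real r)) V" "V \<subseteq> {x. unit_bounds x \<noteq> {}}"
    and "\<And>x. x \<in> V \<Longrightarrow> norm_b sc K e x = 0 \<Longrightarrow> x = 0"
  shows "is_norm_on sc V (norm_b sc K e)"
  using assms norm_b_nonneg norm_b_zero norm_b_scale norm_b_triangle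
  unfolding is_norm_on_def by blast

end

locale core_forms = vector_space sc for sc :: "complex \<Rightarrow> 'a::ab_group_add \<Rightarrow> 'a" +
  fixes invol :: "'a \<Rightarrow> 'a"
    and mul :: "'a \<Rightarrow> 'a \<Rightarrow> 'a"
    and B :: "'a set"
    and e :: 'a
    and M :: "('a \<Rightarrow> 'a \<Rightarrow> complex) set"
  assumes invol_add: "invol (x + y) = invol x + invol y"
    and invol_scale: "invol (sc c x) = sc (cnj c) (invol x)"
    and mul_linear_left: "z \<in> B \<Longrightarrow> mul (sc \<alpha> x + sc \<beta> y) z = sc \<alpha> (mul x z) + sc \<beta> (mul y z)"
    and mul_linear_right:
      "a \<in> B \<Longrightarrow> b \<in> B \<Longrightarrow> mul x (sc \<alpha> a + sc \<beta> b) = sc \<alpha> (mul x a) + sc \<beta> (mul x b)"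
    and subspace_core: "subspace B"
    and unit_in_core: "e \<in> B"
    and mul_unit_right: "mul x e = x"
    and mul_unit_left: "mul e x = x"
    and forms_sesquilinear: "phi \<in> M \<Longrightarrow> positive_sesquilinear sc phi"
    and forms_core_dense: "phi \<in> M \<Longrightarrow> 0 < \<epsilon> \<Longrightarrow> \<exists>b\<in>B. Re (phi (x - b) (x - b)) < \<epsilon>"
    and forms_adjoint: "phi \<in> M \<Longrightarrow> a \<in> B \<Longrightarrow> b \<in> B \<Longrightarrow> phi (mul x a) b = phi a (mul (invol x) b)"
    and forms_sufficient: "sufficient M"
begin

lemma mul_add_left: "c \<in> B \<Longrightarrow> mul (x + y) c = mul x c + mul y c"
  using mul_linear_left[of c 1 x 1 y] by simp

lemma mul_scale_left: "c \<in> B \<Longrightarrow> mul (sc \<alpha> x) c = sc \<alpha> (mul x c)"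
  using mul_linear_left[of c \<alpha> x 0 x] by simp

lemma mul_diff_left: "c \<in> B \<Longrightarrow> mul (x - y) c = mul x c - mul y c"
  using mul_linear_left[of c 1 x "-1" y] by (simp add: scale_minus_left)

lemma mul_add_right: "a \<in> B \<Longrightarrow> b \<in> B \<Longrightarrow> mul x (a + b) = mul x a + mul x b"
  using mul_linear_right[of a b x 1 1] by simp

lemma mul_scale_right: "a \<in> B \<Longrightarrow> mul x (sc \<alpha> a) = sc \<alpha> (mul x a)"
  using mul_linear_right[of a a x \<alpha> 0] by simp

context
  fixes phi assumes phi: "phi \<in> M"
begin

lemma form_add_left: "phi (x + y) z = phi x z + phi y z"
  and form_add_right: "phi x (y + z) = phi x y + phi x z"
  and form_scale_left: "phi (sc c x) y = c * phi x y"
  and form_scale_right: "phi x (sc c y) = cnj c * phi x y"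
  and form_self_real: "Im (phi x x) = 0"
  and form_self_nonneg: "0 \<le> Re (phi x x)"
  using forms_sesquilinear[OF phi] by (simp_all add: positive_sesquilinear_def)

lemma form_diff_left: "phi (x - y) z = phi x z - phi y z"
  using form_add_left[of "x - y" y z] by simp

lemma form_diff_right: "phi x (y - z) = phi x y - phi x z"
  using form_add_right[of x "y - z" z] by simp

lemma form_mul_zero_if_diagonal_zero:
  assumes diag: "\<And>c. c \<in> B \<Longrightarrow> phi (mul x c) c = 0" and "a \<in> B" "b \<in> B"
  shows "phi (mul x a) b = 0"
proof -
  have "a + b \<in> B" "a + sc \<i> b \<in> B" "sc \<i> b \<in> B"
    using assms subspace_core by (simp_all add: subspace_def)
  then have "phi (mul x a) b + phi (mul x b) a = 0"
    and "- \<i> * phi (mul x a) b + \<i> * phi (mul x b) a = 0"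
    using diag[of "a + b"] diag[of "a + sc \<i> b"] diag[of a] diag[of b] assms
    by (simp_all add: mul_add_right mul_scale_right form_add_left form_add_right
        form_scale_left form_scale_right)
  then show ?thesis
    by (simp add: algebra_simps)
qed

lemma form_self_zero_if_orthogonal_core:
  assumes "\<And>b. b \<in> B \<Longrightarrow> phi x b = 0 \<and> phi b x = 0"
  shows "phi x x = 0"
proof -
  have "Re (phi x x) \<le> 0 + \<epsilon>" if \<epsilon>: "0 < \<epsilon>" for \<epsilon>
  proof -
    obtain b where b: "b \<in> B" "Re (phi (x - b) (x - b)) < \<epsilon>"
      using forms_core_dense[OF phi \<epsilon>] by blast
    then have "phi (x - b) (x - b) = phi x x + phi b b"
      using assms by (simp add: form_diff_left form_diff_right)
    then show ?thesis
      using b(2) form_self_nonneg[of b] by simp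
  qed
  then have "Re (phi x x) \<le> 0"
    by (rule field_le_epsilon)
  then show ?thesis
    using form_self_real[of x] form_self_nonneg[of x] by (simp add: complex_eq_iff)
qed

end

sublocale order_unit_cone sc "pos_cone mul B M" e
proof
  show "x + y \<in> pos_cone mul B M" if "x \<in> pos_cone mul B M" "y \<in> pos_cone mul B M" for x y
    using that by (simp add: pos_cone_def mul_add_left form_add_left)
  show "sc (of_real r) x \<in> pos_cone mul B M" if "x \<in> pos_cone mul B M" "0 \<le> r" for x r
    using that by (simp add: pos_cone_def mul_scale_left form_scale_left)
  show "e \<in> pos_cone mul B M"
    by (simp add: pos_cone_def mul_unit_left form_self_real form_self_nonneg)
qed

lemma form_diagonal_zero_if_norm_b_zero:
  assumes bounded: "unit_bounds x \<noteq> {}" and zero: "norm_b sc (pos_cone mul B M) e x = 0"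
    and phi: "phi \<in> M" and c: "c \<in> B"
  shows "phi (mul x c) c = 0"
proof -
  let ?u = "phi (mul x c) c" and ?q = "Re (phi c c)"
  have bound: "Im ?u = 0 \<and> \<bar>Re ?u\<bar> \<le> \<gamma> * ?q" if "\<gamma> \<in> unit_bounds x" for \<gamma>
  proof -
    have "phi (mul (x + sc (of_real \<gamma>) e) c) c = ?u + of_real \<gamma> * phi c c"
      "phi (mul (sc (of_real \<gamma>) e - x) c) c = of_real \<gamma> * phi c c - ?u"
      using c phi by (simp_all add: mul_add_left mul_diff_left mul_scale_left mul_unit_left
          form_add_left form_diff_left form_scale_left)
    moreover have "x + sc (of_real \<gamma>) e \<in> pos_cone mul B M" "sc (of_real \<gamma>) e - x \<in> pos_cone mul B M"
      using that by (simp_all add: mem_unit_bounds)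
    then have "Im (phi (mul (x + sc (of_real \<gamma>) e) c) c) = 0"
      "0 \<le> Re (phi (mul (x + sc (of_real \<gamma>) e) c) c)"
      "0 \<le> Re (phi (mul (sc (of_real \<gamma>) e - x) c) c)"
      using phi c unfolding pos_cone_def by blast+
    ultimately have "Im (?u + of_real \<gamma> * phi c c) = 0" "0 \<le> Re (?u + of_real \<gamma> * phi c c)"
      "0 \<le> Re (of_real \<gamma> * phi c c - ?u)"
      by simp_all
    then show ?thesis
      using form_self_real[OF phi, of c] by auto
  qed
  have "Inf ((*) ?q ` unit_bounds x) = 0"
    using bounded zero form_self_nonneg[OF phi]
    by (simp add: cInf_image_mult_left bdd_below_unit_bounds norm_b_eq_Inf)
  moreover have "\<bar>Re ?u\<bar> \<le> Inf ((*) ?q ` unit_bounds x)"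
    using bounded bound by (intro cInf_greatest) (auto simp: mult.commute)
  ultimately show ?thesis
    using bound bounded by (auto simp: complex_eq_iff)
qed

lemma zero_if_hermitian_norm_b_zero:
  assumes herm: "invol x = x" and bounded: "unit_bounds x \<noteq> {}"
    and zero: "norm_b sc (pos_cone mul B M) e x = 0"
  shows "x = 0"
proof -
  have "phi x x = 0" if phi: "phi \<in> M" for phi
  proof (rule form_self_zero_if_orthogonal_core[OF phi])
    fix b assume b: "b \<in> B"
    have vanish: "phi (mul x a) a' = 0" if "a \<in> B" "a' \<in> B" for a a'
      using form_mul_zero_if_diagonal_zero[OF phi _ that]
        form_diagonal_zero_if_norm_b_zero[OF bounded zero phi] by blast
    show "phi x b = 0 \<and> phi b x = 0"
      using vanish[OF unit_in_core b] vanish[OF b unit_in_core]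
        forms_adjoint[OF phi b unit_in_core, of x]
      by (simp add: mul_unit_right herm)
  qed
  then show ?thesis
    using forms_sufficient by (simp add: sufficient_def)
qed

lemma invol_zero: "invol 0 = 0"
  using invol_add[of 0 0] by simp

lemma real_subspace_hermitian: "module.subspace (\<lambda>r. sc (of_real r)) {x. invol x = x}"
  unfolding module.subspace_def[OF module_of_real_scale]
  by (simp add: invol_zero invol_add invol_scale)

lemma Ab_h_eq: "Ab_h sc invol (pos_cone mul B M) e = {x. unit_bounds x \<noteq> {}} \<inter> {x. invol x = x}"
proof -
  have "sc (1 / 2) (x + x) = x" for x
    by (simp add: scale_right_distrib flip: scale_left_distrib)
  then have "Re_part sc invol x = x" "Im_part sc invol x = 0" if "invol x = x" for x
    using that by (simp_all add: Re_part_def Im_part_def)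
  then have "K_bounded sc invol (pos_cone mul B M) e x \<longleftrightarrow> unit_bounds x \<noteq> {}" if "invol x = x" for x
    using that scale_unit_in_cone
    by (auto simp: K_bounded_def K_le_def unit_bounds_nonempty_iff add.commute)
  then show ?thesis
    by (auto simp: Ab_h_def)
qed

lemma is_norm_on_Ab_h:
  "is_norm_on sc (Ab_h sc invol (pos_cone mul B M) e) (norm_b sc (pos_cone mul B M) e)"
  unfolding Ab_h_eq
  by (intro is_norm_on_if_definite module.subspace_inter module_of_real_scale
      real_subspace_bounded real_subspace_hermitian)
    (auto intro: zero_if_hermitian_norm_b_zero)

end

lemma core_forms_of_multiplication_core:
  assumes "partial_star_algebra sc invol Gam mul"
    and "is_unit_elem invol Gam mul e"
    and core: "multiplication_core sc invol Gam mul P e B"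
    and "M \<subseteq> P_B sc invol Gam mul P B"
    and "sufficient M"
  shows "core_forms sc invol mul B e M"
proof -
  have "(x, b) \<in> Gam" if "b \<in> B" for x b
    using core that by (auto simp: multiplication_core_def RA_def)
  then show ?thesis
    using assms
    unfolding core_forms_def core_forms_axioms_def partial_star_algebra_def is_unit_elem_def
      multiplication_core_def P_B_def ips_form_def
    by (auto simp: subset_iff)
qed

theorem lemma5p19:
  fixes sc :: "complex \<Rightarrow> 'a::ab_group_add \<Rightarrow> 'a"
    and invol :: "'a \<Rightarrow> 'a"
    and Gam :: "('a \<times> 'a) set"
    and mul :: "'a \<Rightarrow> 'a \<Rightarrow> 'a"
    and P :: "('a \<Rightarrow> real) set"
    and B :: "'a set"
    and e :: 'a
    and M :: "('a \<Rightarrow> 'a \<Rightarrow> complex) set"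
  assumes "topological_partial_star_algebra sc invol Gam mul P"
    and "semi_associative Gam mul"
    and "is_unit_elem invol Gam mul e"
    and "multiplication_core sc invol Gam mul P e B"
    and "M \<subseteq> P_B sc invol Gam mul P B"
    and "sufficient M"
  shows "is_norm_on sc (Ab_h sc invol (pos_cone mul B M) e) (norm_b sc (pos_cone mul B M) e)"
proof -
  have "partial_star_algebra sc invol Gam mul"
    using assms(1) by (simp add: topological_partial_star_algebra_def)
  then interpret core_forms sc invol mul B e M
    using assms(3-6) by (rule core_forms_of_multiplication_core)
  show ?thesis
    by (rule is_norm_on_Ab_h)
qed

end
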